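(* Let $\mathcal{H}$ be a complex linear space equipped with an indefinite inner product $[\cdot,\cdot]$, and let $\mathcal{F}_{++}=\{f\in\mathcal{H} : [f,f]>0\}$. Then every $f\in\mathcal{H}$ can be written as $f=g_1+g_2$ with $g_1,g_2\in\mathcal{F}_{++}$, i.e. $\mathcal{H}=\mathcal{F}_{++}+\mathcal{F}_{++}$. Moreover, every linear operator $W$ defined on $\mathcal{F}_{++}$ can be uniquely extended to a linear operator acting on the whole space $\mathcal{H}$.
   Context: An indefinite inner product on a complex linear space $\mathcal{H}$ is a Hermitian sesquilinear form $[\cdot,\cdot]:\mathcal{H}\times\mathcal{H}\to\mathbb{C}$ (linear in the second argument, $[f,g]=\overline{[g,f]}$) such that there exist $f$ with $[f,f]>0$ and $g$ with $[g,g]<0$. Throughout, $\mathcal{H}$ is assumed non-degenerate: $[f,g]=0$ for all $g\in\mathcal{H}$ implies $f=0$. An operator $W:\mathcal{F}_{++}\to\mathcal{H}$ is called linear (on $\mathcal{F}_{++}$) if $W(cf)=cWf$ for all $f\in\mathcal{F}_{++}$ and nonzero $c\in\mathbb{C}$, and $W(f+g)=Wf+Wg$ whenever $f,g\in\mathcal{F}_{++}$ and $f+g\in\mathcal{F}_{++}$. *)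

theory Defs
  imports "HOL-Analysis.Analysis"
begin

text \<open>A complex linear space is modelled as a type 'a (abelian group) together with a
  scalar multiplication sc :: complex => 'a => 'a satisfying the vector space axioms
  (locale vector_space from HOL.Vector_Spaces).\<close>

definition hermitian_sesq :: "(complex \<Rightarrow> 'a::ab_group_add \<Rightarrow> 'a) \<Rightarrow> ('a \<Rightarrow> 'a \<Rightarrow> complex) \<Rightarrow> bool" where
  "hermitian_sesq sc ip \<longleftrightarrow>
     (\<forall>f g h. ip f (g + h) = ip f g + ip f h) \<and>
     (\<forall>f g c. ip f (sc c g) = c * ip f g) \<and>
     (\<forall>f g. ip f g = cnj (ip g f))"

definition indefinite_ip :: "(complex \<Rightarrow> 'a::ab_group_add \<Rightarrow> 'a) \<Rightarrow> ('a \<Rightarrow> 'a \<Rightarrow> complex) \<Rightarrow> bool" where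
  "indefinite_ip sc ip \<longleftrightarrow> hermitian_sesq sc ip \<and>
     (\<exists>f. 0 < Re (ip f f)) \<and> (\<exists>g. Re (ip g g) < 0)"

definition nondegenerate :: "('a::ab_group_add \<Rightarrow> 'a \<Rightarrow> complex) \<Rightarrow> bool" where
  "nondegenerate ip \<longleftrightarrow> (\<forall>f. (\<forall>g. ip f g = 0) \<longrightarrow> f = 0)"

text \<open>The positive cone F_{++}; for a Hermitian form ip f f is real, so [f,f] > 0 means Re (ip f f) > 0.\<close>
definition Fpp :: "('a \<Rightarrow> 'a \<Rightarrow> complex) \<Rightarrow> 'a set" where
  "Fpp ip = {f. 0 < Re (ip f f)}"

definition linear_on_Fpp ::
  "(complex \<Rightarrow> 'a::ab_group_add \<Rightarrow> 'a) \<Rightarrow> ('a \<Rightarrow> 'a \<Rightarrow> complex) \<Rightarrow> ('a \<Rightarrow> 'a) \<Rightarrow> bool" where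
  "linear_on_Fpp sc ip W \<longleftrightarrow>
     (\<forall>f\<in>Fpp ip. \<forall>c. c \<noteq> 0 \<longrightarrow> W (sc c f) = sc c (W f)) \<and>
     (\<forall>f\<in>Fpp ip. \<forall>g\<in>Fpp ip. f + g \<in> Fpp ip \<longrightarrow> W (f + g) = W f + W g)"

end

theory Submission
  imports Defs "HOL-Real_Asymp.Real_Asymp"
begin

text \<open>Fix p with [p,p] > 0. For every f the real quadratic t \<mapsto> [f + t p, f + t p] has positive
  leading coefficient [p,p], so f + t p lies in F++ for all large t, and f = (f + t p) + (-t p) is a
  sum of two elements of F++. A map W linear on F++ therefore extends by V (a + b) = W a + W b.
  This is well defined: shifting by t p with t large makes all partial sums positive, and then
  W a + W b = W (a + b + t p) - t W p depends on a + b only.\<close>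

locale hermitian_form = vector_space sc for sc :: "complex \<Rightarrow> 'a::ab_group_add \<Rightarrow> 'a" +
  fixes ip :: "'a \<Rightarrow> 'a \<Rightarrow> complex"
  assumes hermitian: "hermitian_sesq sc ip"
begin

lemma ip_add_right: "ip f (g + h) = ip f g + ip f h"
  using hermitian unfolding hermitian_sesq_def by blast

lemma ip_scale_right: "ip f (sc c g) = c * ip f g"
  using hermitian unfolding hermitian_sesq_def by blast

lemma ip_cnj_commute: "ip f g = cnj (ip g f)"
  using hermitian unfolding hermitian_sesq_def by blast

lemma ip_add_left: "ip (f + g) h = ip f h + ip g h"
  by (metis ip_cnj_commute ip_add_right complex_cnj_add)

lemma ip_scale_left: "ip (sc c f) g = cnj c * ip f g"
  by (metis ip_cnj_commute ip_scale_right complex_cnj_mult)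

lemma Fpp_scale:
  assumes "f \<in> Fpp ip" "c \<noteq> 0"
  shows "sc c f \<in> Fpp ip"
proof -
  have "ip (sc c f) (sc c f) = (c * cnj c) * ip f f"
    by (simp add: ip_scale_left ip_scale_right mult.assoc mult.left_commute)
  also have "c * cnj c = of_real ((cmod c)\<^sup>2)"
    by (metis complex_norm_square of_real_power)
  finally have "Re (ip (sc c f) (sc c f)) = (cmod c)\<^sup>2 * Re (ip f f)"
    by simp
  then show ?thesis
    using assms by (simp add: Fpp_def)
qed

lemma Re_ip_shift:
  "Re (ip (x + sc (of_real t) p) (x + sc (of_real t) p)) =
     Re (ip x x) + 2 * t * Re (ip x p) + t\<^sup>2 * Re (ip p p)"
proof -
  have "ip (x + sc (of_real t) p) (x + sc (of_real t) p) =
      ip x x + of_real t * ip x p + of_real t * ip p x + of_real t * of_real t * ip p p"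
    by (simp add: ip_add_left ip_add_right ip_scale_left ip_scale_right algebra_simps)
  moreover have "Re (ip p x) = Re (ip x p)"
    by (subst ip_cnj_commute) simp
  ultimately show ?thesis
    by (simp add: power2_eq_square)
qed

lemma eventually_shift_in_Fpp:
  assumes "p \<in> Fpp ip"
  shows "\<forall>\<^sub>F t in at_top. x + sc (of_real t) p \<in> Fpp ip"
proof -
  have "Re (ip p p) > 0"
    using assms by (simp add: Fpp_def)
  then have "\<forall>\<^sub>F t in at_top. 0 < Re (ip x x) + 2 * t * Re (ip x p) + t\<^sup>2 * Re (ip p p)"
    by real_asymp
  then show ?thesis
    by (simp add: Fpp_def Re_ip_shift)
qed

lemma ex_common_shift_in_Fpp:
  assumes "p \<in> Fpp ip" "finite X"
  obtains t :: real where "t > 0" "\<And>x. x \<in> X \<Longrightarrow> x + sc (of_real t) p \<in> Fpp ip"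
proof -
  have "\<forall>\<^sub>F t in at_top. \<forall>x\<in>X. x + sc (of_real t) p \<in> Fpp ip"
    using eventually_shift_in_Fpp[OF assms(1)] by (intro eventually_ball_finite[OF assms(2)]) blast
  then have "\<forall>\<^sub>F t in at_top. t > (0::real) \<and> (\<forall>x\<in>X. x + sc (of_real t) p \<in> Fpp ip)"
    by (intro eventually_conj eventually_gt_at_top)
  then show ?thesis
    using that eventually_happens'[OF trivial_limit_at_top_linorder] by blast
qed

lemma Fpp_sum_decomposition:
  assumes "Fpp ip \<noteq> {}"
  obtains a b where "a \<in> Fpp ip" "b \<in> Fpp ip" "f = a + b"
proof -
  obtain p where p: "p \<in> Fpp ip"
    using assms by blast
  obtain t where "t > 0" and shift: "f + sc (of_real t) p \<in> Fpp ip"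
    using ex_common_shift_in_Fpp[OF p, of "{f}"] by auto
  then have "- sc (of_real t) p \<in> Fpp ip"
    using Fpp_scale[OF p, of "- of_real t"] by simp
  moreover have "f = (f + sc (of_real t) p) + - sc (of_real t) p"
    by simp
  ultimately show ?thesis
    using that shift by blast
qed

end

locale Fpp_linear = hermitian_form sc ip for sc :: "complex \<Rightarrow> 'a::ab_group_add \<Rightarrow> 'a" and ip +
  fixes W :: "'a \<Rightarrow> 'a"
  assumes linear_on_Fpp: "linear_on_Fpp sc ip W"
    and Fpp_nonempty: "Fpp ip \<noteq> {}"
begin

lemma W_scale: "f \<in> Fpp ip \<Longrightarrow> c \<noteq> 0 \<Longrightarrow> W (sc c f) = sc c (W f)"
  using linear_on_Fpp unfolding linear_on_Fpp_def by blast

lemma W_add: "f \<in> Fpp ip \<Longrightarrow> g \<in> Fpp ip \<Longrightarrow> f + g \<in> Fpp ip \<Longrightarrow> W (f + g) = W f + W g"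
  using linear_on_Fpp unfolding linear_on_Fpp_def by blast

lemma W_add_shift:
  assumes "p \<in> Fpp ip" "a \<in> Fpp ip" "b \<in> Fpp ip" "t > 0"
    and "b + sc (of_real t) p \<in> Fpp ip" "a + b + sc (of_real t) p \<in> Fpp ip"
  shows "W (a + b + sc (of_real t) p) = W a + W b + sc (of_real t) (W p)"
proof -
  have tp: "sc (of_real t) p \<in> Fpp ip"
    using Fpp_scale[OF assms(1), of "of_real t"] assms(4) by simp
  have "W (a + b + sc (of_real t) p) = W a + W (b + sc (of_real t) p)"
    using W_add[OF assms(2,5)] assms(6) by (simp add: add.assoc)
  also have "\<dots> = W a + W b + sc (of_real t) (W p)"
    using W_add[OF assms(3) tp assms(5)] W_scale[OF assms(1), of "of_real t"] assms(4)
    by (simp add: add.assoc)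
  finally show ?thesis .
qed

lemma W_sum_well_defined:
  assumes "a \<in> Fpp ip" "b \<in> Fpp ip" "a' \<in> Fpp ip" "b' \<in> Fpp ip" "a + b = a' + b'"
  shows "W a + W b = W a' + W b'"
proof -
  obtain p where p: "p \<in> Fpp ip"
    using Fpp_nonempty by blast
  obtain t where "t > 0" and "\<And>x. x \<in> {b, b', a + b} \<Longrightarrow> x + sc (of_real t) p \<in> Fpp ip"
    using ex_common_shift_in_Fpp[OF p, of "{b, b', a + b}"] by auto
  then have "b + sc (of_real t) p \<in> Fpp ip" "b' + sc (of_real t) p \<in> Fpp ip"
    and "a + b + sc (of_real t) p \<in> Fpp ip" "a' + b' + sc (of_real t) p \<in> Fpp ip"
    using assms(5) by auto
  then have "W a + W b + sc (of_real t) (W p) = W a' + W b' + sc (of_real t) (W p)"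
    using W_add_shift[OF p assms(1,2) \<open>t > 0\<close>] W_add_shift[OF p assms(3,4) \<open>t > 0\<close>] assms(5)
    by simp
  then show ?thesis
    by simp
qed

definition extension :: "'a \<Rightarrow> 'a" where
  "extension f = (SOME v. \<exists>a\<in>Fpp ip. \<exists>b\<in>Fpp ip. f = a + b \<and> v = W a + W b)"

lemma extension_sum:
  assumes a: "a \<in> Fpp ip" and b: "b \<in> Fpp ip"
  shows "extension (a + b) = W a + W b"
  unfolding extension_def
proof (rule someI2)
  show "\<exists>a'\<in>Fpp ip. \<exists>b'\<in>Fpp ip. a + b = a' + b' \<and> W a + W b = W a' + W b'"
    using assms by blast
next
  fix v
  assume "\<exists>a'\<in>Fpp ip. \<exists>b'\<in>Fpp ip. a + b = a' + b' \<and> v = W a' + W b'"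
  then obtain a' b' where "a' \<in> Fpp ip" "b' \<in> Fpp ip" "a + b = a' + b'" "v = W a' + W b'"
    by blast
  then show "v = W a + W b"
    using W_sum_well_defined[OF a b] by simp
qed

lemma extension_eq_W:
  assumes "f \<in> Fpp ip"
  shows "extension f = W f"
proof -
  define h where "h = sc (1 / 2) f"
  have h: "h \<in> Fpp ip"
    unfolding h_def using Fpp_scale[OF assms] by simp
  have "h + h = f"
    unfolding h_def by (simp flip: scale_left_distrib)
  then show ?thesis
    using extension_sum[OF h h] W_add[OF h h] assms by simp
qed

lemma extension_shift:
  assumes "p \<in> Fpp ip" "t > 0" "f + sc (of_real t) p \<in> Fpp ip"
  shows "extension f = W (f + sc (of_real t) p) - sc (of_real t) (W p)"
proof -
  have neg: "- sc (of_real t) p \<in> Fpp ip"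
    using Fpp_scale[OF assms(1), of "- of_real t"] assms(2) by simp
  have "extension f = extension ((f + sc (of_real t) p) + - sc (of_real t) p)"
    by simp
  also have "\<dots> = W (f + sc (of_real t) p) + W (- sc (of_real t) p)"
    by (rule extension_sum[OF assms(3) neg])
  also have "W (- sc (of_real t) p) = - sc (of_real t) (W p)"
    using W_scale[OF assms(1), of "- of_real t"] assms(2) by simp
  finally show ?thesis
    by simp
qed

lemma extension_add: "extension (f + g) = extension f + extension g"
proof -
  obtain p where p: "p \<in> Fpp ip"
    using Fpp_nonempty by blast
  obtain s where "s > 0" and gs: "g + sc (of_real s) p \<in> Fpp ip"
    using ex_common_shift_in_Fpp[OF p, of "{g}"] by auto
  obtain t where "t > 0" and shifts: "\<And>x. x \<in> {f, f + g + sc (of_real s) p} \<Longrightarrow> x + sc (of_real t) p \<in> Fpp ip"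
    using ex_common_shift_in_Fpp[OF p, of "{f, f + g + sc (of_real s) p}"] by auto
  have shift_sum: "f + g + sc (of_real (t + s)) p = (f + sc (of_real t) p) + (g + sc (of_real s) p)"
    by (simp add: scale_left_distrib algebra_simps)
  have ft: "f + sc (of_real t) p \<in> Fpp ip"
    using shifts by simp
  have fgts: "f + g + sc (of_real (t + s)) p \<in> Fpp ip"
    using shifts[of "f + g + sc (of_real s) p"] by (simp add: scale_left_distrib algebra_simps)
  have "extension (f + g) = W (f + g + sc (of_real (t + s)) p) - sc (of_real (t + s)) (W p)"
    using \<open>s > 0\<close> \<open>t > 0\<close> by (intro extension_shift[OF p _ fgts]) simp
  also have "\<dots> = (W (f + sc (of_real t) p) - sc (of_real t) (W p)) +
                  (W (g + sc (of_real s) p) - sc (of_real s) (W p))"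
    using W_add[OF ft gs] fgts unfolding shift_sum by (simp add: scale_left_distrib algebra_simps)
  also have "\<dots> = extension f + extension g"
    using extension_shift[OF p \<open>t > 0\<close> ft] extension_shift[OF p \<open>s > 0\<close> gs] by simp
  finally show ?thesis .
qed

lemma extension_scale: "extension (sc c f) = sc c (extension f)"
proof (cases "c = 0")
  case True
  have "extension 0 = 0"
    using extension_add[of 0 0] by simp
  with True show ?thesis
    by simp
next
  case False
  obtain a b where ab: "a \<in> Fpp ip" "b \<in> Fpp ip" "f = a + b"
    using Fpp_sum_decomposition Fpp_nonempty by blast
  have "extension (sc c f) = extension (sc c a + sc c b)"
    using ab(3) by (simp add: scale_right_distrib)
  also have "\<dots> = W (sc c a) + W (sc c b)"
    using extension_sum Fpp_scale ab(1,2) False by blast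
  also have "\<dots> = sc c (W a + W b)"
    by (simp add: W_scale[OF ab(1) False] W_scale[OF ab(2) False] scale_right_distrib)
  also have "\<dots> = sc c (extension f)"
    using extension_sum[OF ab(1,2)] ab(3) by simp
  finally show ?thesis .
qed

lemma linear_extension: "Vector_Spaces.linear sc sc extension"
  unfolding Vector_Spaces.linear_iff using extension_add extension_scale vector_space_axioms by blast

lemma linear_extension_unique:
  assumes "Vector_Spaces.linear sc sc U" "\<And>f. f \<in> Fpp ip \<Longrightarrow> U f = W f"
  shows "U = extension"
proof
  fix f
  obtain a b where ab: "a \<in> Fpp ip" "b \<in> Fpp ip" "f = a + b"
    using Fpp_sum_decomposition Fpp_nonempty by blast
  have "U f = U a + U b"
    using assms(1) ab(3) unfolding Vector_Spaces.linear_iff by blast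
  then show "U f = extension f"
    using assms(2) ab extension_sum by simp
qed

end

theorem lemma2p2:
  fixes sc :: "complex \<Rightarrow> 'a::ab_group_add \<Rightarrow> 'a"
    and ip :: "'a \<Rightarrow> 'a \<Rightarrow> complex"
  assumes "vector_space sc"
    and "indefinite_ip sc ip"
    and "nondegenerate ip"
  shows "(\<forall>f. \<exists>g1 g2. g1 \<in> Fpp ip \<and> g2 \<in> Fpp ip \<and> f = g1 + g2) \<and>
         (\<forall>W. linear_on_Fpp sc ip W \<longrightarrow>
            (\<exists>!V. Vector_Spaces.linear sc sc V \<and> (\<forall>f\<in>Fpp ip. V f = W f)))"
proof -
  interpret hermitian_form sc ip
    using assms(1,2) by (simp add: hermitian_form_def hermitian_form_axioms_def indefinite_ip_def)
  have nonempty: "Fpp ip \<noteq> {}"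
    using assms(2) by (auto simp: indefinite_ip_def Fpp_def)
  show ?thesis
  proof (intro conjI allI impI)
    fix f
    show "\<exists>g1 g2. g1 \<in> Fpp ip \<and> g2 \<in> Fpp ip \<and> f = g1 + g2"
      using Fpp_sum_decomposition[OF nonempty] by metis
  next
    fix W
    assume "linear_on_Fpp sc ip W"
    then interpret Fpp_linear sc ip W
      using nonempty by unfold_locales
    show "\<exists>!V. Vector_Spaces.linear sc sc V \<and> (\<forall>f\<in>Fpp ip. V f = W f)"
      using linear_extension extension_eq_W linear_extension_unique by blast
  qed
qed

end
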